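(* Consider $\bm{y}=\bm{A}\bm{x}+\bm{w}$ over $\mathbb{H}\in\{\mathbb{R},\mathbb{C}\}$, with $\bm A$ having i.i.d. entries $\mathcal{N}(0,1/m)$ (resp. $\mathcal{CN}(0,1/m)$), Gaussian noise of variance $\sigma_w^2=\delta\sigma_0^2$ ($\delta=m/n$, $\sigma_0^2>0$ constant), and signal entries i.i.d. from the least-favorable distribution with sparsity level $\epsilon\in(0,1]$, recovered by AMP with (real or complex) soft thresholding and optimal threshold. Let $\delta^\dagger$ be the MSE-optimal measurement ratio, which satisfies $\delta^\dagger=2M(\epsilon,\alpha^\dagger)$ in the real case and $\delta^\dagger=2M_C(\epsilon,\alpha^\dagger)$ in the complex case. Then $\delta^{\dagger}<2$. Moreover, if $M(\epsilon,\alpha^{\dagger})<0.5$ in the real case, respectively $M_C(\epsilon,\alpha^{\dagger})<0.5$ in the complex case, then $\delta^{\dagger}<1$.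
   Context: Real case: the least-favorable distribution is $p_x=\frac{\epsilon}{2}\Delta_{x=-\mu}+(1-\epsilon)\Delta_{x=0}+\frac{\epsilon}{2}\Delta_{x=\mu}$ with $\mu\to\infty$, and $$M(\epsilon,\alpha)=\epsilon(1+\alpha^2)+(1-\epsilon)\left[2(1+\alpha^2)\Phi(-\alpha)-2\alpha\phi(\alpha)\right],\quad \alpha^\dagger=\arg\min_{\alpha\ge0}M(\epsilon,\alpha).$$ Complex case: $|x|$ has distribution $(1-\epsilon)\Delta_{|x|=0}+\epsilon\Delta_{|x|=+\infty}$ with isotropic phase, the estimator is $\eta(\beta,\lambda)=(\beta-\lambda\beta/|\beta|)\mathbf{1}_{\{|\beta|>\lambda\}}$, and $$M_C(\epsilon,\alpha)=\epsilon(1+\alpha^2)+(1-\epsilon)\left[\sqrt{2\pi}\,\phi(\sqrt2\alpha)-2\alpha\sqrt{\pi}\,\Phi(-\sqrt2\alpha)\right],\quad \alpha^\dagger=\arg\min_{\alpha\ge0}M_C(\epsilon,\alpha).$$ Here $\phi,\Phi$ are the standard Gaussian density and CDF. The MSE-optimal $\delta^\dagger$ is the minimizer over $\delta$ of the state-evolution fixed-point MSE $\mathrm{Err}_\infty=\frac{M\delta^2\sigma_0^2}{\delta-M}$ (with $M=M(\epsilon,\alpha^\dagger)$ or $M_C(\epsilon,\alpha^\dagger)$), assuming AMP converges. *)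

theory Defs
  imports "HOL-Probability.Probability"
begin

abbreviation phi :: "real \<Rightarrow> real" where
  "phi \<equiv> std_normal_density"

definition Phi :: "real \<Rightarrow> real" where
  "Phi x = (LBINT t:{..x}. std_normal_density t)"

text \<open>Real case: minimax MSE of soft thresholding under the least-favorable prior.\<close>
definition M_R :: "real \<Rightarrow> real \<Rightarrow> real" where
  "M_R \<epsilon> \<alpha> = \<epsilon> * (1 + \<alpha>\<^sup>2)
     + (1 - \<epsilon>) * (2 * (1 + \<alpha>\<^sup>2) * Phi (-\<alpha>) - 2 * \<alpha> * phi \<alpha>)"

definition M_C :: "real \<Rightarrow> real \<Rightarrow> real" where
  "M_C \<epsilon> \<alpha> = \<epsilon> * (1 + \<alpha>\<^sup>2)
     + (1 - \<epsilon>) * (sqrt (2 * pi) * phi (sqrt 2 * \<alpha>)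
                     - 2 * \<alpha> * sqrt pi * Phi (- sqrt 2 * \<alpha>))"

text \<open>State-evolution fixed-point MSE as a function of the measurement ratio delta,
  valid for delta > M.\<close>
definition Err_inf :: "real \<Rightarrow> real \<Rightarrow> real \<Rightarrow> real" where
  "Err_inf M \<sigma>0 \<delta> = M * \<delta>\<^sup>2 * \<sigma>0\<^sup>2 / (\<delta> - M)"

end

theory Submission
  imports Defs "HOL-Real_Asymp.Real_Asymp"
begin

text \<open>
  For \<open>M > 0\<close> the fixed-point error \<open>Err_inf M \<sigma>0\<close> is minimised over \<open>\<delta> > M\<close> exactly at
  \<open>\<delta> = 2 M\<close>, so both claims reduce to \<open>0 < M(\<epsilon>, \<alpha>\<dagger>) < 1\<close>.

  Positivity: the \<open>(1 - \<epsilon>)\<close>-brackets are the risks of soft thresholding a zero signal,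
  i.e. lower partial moments \<open>E (b - Z)\<^sub>+\<^sup>k\<close> of a standard Gaussian \<open>Z\<close>
  (\<open>k = 2\<close>, \<open>b = -\<alpha>\<close> in the real case; \<open>k = 1\<close>, \<open>b = -\<surd>2 \<alpha>\<close> in the complex case),
  which are computed by integrating by parts against \<open>\<phi>' x = - x \<phi> x\<close>.

  Upper bound: \<open>M(\<epsilon>, 0) = 1\<close> and \<open>\<partial>\<^sub>\<alpha> M(\<epsilon>, 0) < 0\<close>, so the minimum over \<open>\<alpha> \<ge> 0\<close> is below 1.
\<close>

lemma DERIV_std_normal_density [derivative_intros]:
  assumes "(f has_real_derivative f') (at x within S)"
  shows "((\<lambda>x. phi (f x)) has_real_derivative - f x * phi (f x) * f') (at x within S)"
proof -
  have "((\<lambda>y. (1 / sqrt (2 * pi)) * exp (- y\<^sup>2 / 2)) has_real_derivative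
          (1 / sqrt (2 * pi)) * (exp (- y\<^sup>2 / 2) * (- (2 * y) / 2))) (at y)" for y
    by (intro DERIV_cmult DERIV_fun_exp) (auto intro!: derivative_eq_intros)
  then have "DERIV phi y :> - y * phi y" for y
    unfolding std_normal_density_def by (simp add: field_simps)
  from DERIV_chain2[OF this assms] show ?thesis .
qed

lemma isCont_std_normal_density: "isCont phi x"
  using DERIV_isCont[OF DERIV_std_normal_density[OF DERIV_ident]] by simp

lemma std_normal_density_minus [simp]: "phi (- x) = phi x"
  by (simp add: std_normal_density_def)

lemma std_normal_density_at_bot: "(phi \<longlongrightarrow> 0) at_bot"
  unfolding std_normal_density_def by real_asymp

lemma set_integrable_std_normal_moment:
  "A \<in> sets lborel \<Longrightarrow> set_integrable lborel A (\<lambda>x. phi x * x ^ k)"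
  unfolding set_integrable_def
  by (intro integrable_mult_indicator integrable_std_normal_moment) auto

lemma set_integrable_std_normal_density: "A \<in> sets lborel \<Longrightarrow> set_integrable lborel A phi"
  using set_integrable_std_normal_moment[of A 0] by simp

lemma Phi_eq_tail_integral: "Phi b = (LBINT x:{..<b}. phi x)"
  unfolding Phi_def
proof (rule set_integral_cong_set)
  show "AE x in lborel. (x \<in> {..<b}) = (x \<in> {..b})"
    using AE_lborel_singleton[of b] by eventually_elim auto
qed (auto simp: set_borel_measurable_def)

lemma tail_integral_antiderivative:
  fixes F f :: "real \<Rightarrow> real"
  assumes F: "\<And>x. x < b \<Longrightarrow> DERIV F x :> f x"
    and f: "\<And>x. x < b \<Longrightarrow> isCont f x"
    and int: "set_integrable lborel {..<b} f"
    and lim: "(F \<longlongrightarrow> 0) at_bot"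
    and cont: "isCont F b"
  shows "(LBINT x:{..<b}. f x) = F b"
proof -
  have "(LBINT x=-\<infinity>..ereal b. f x) = F b - 0"
  proof (rule interval_integral_FTC_integrable)
    show "set_integrable lborel (einterval (-\<infinity>) (ereal b)) f"
      using int by simp
    show "((F \<circ> real_of_ereal) \<longlongrightarrow> 0) (at_right (-\<infinity>))"
      unfolding ereal_tendsto_simps using lim .
    show "((F \<circ> real_of_ereal) \<longlongrightarrow> F b) (at_left (ereal b))"
      unfolding ereal_tendsto_simps using cont
      by (simp add: continuous_at filterlim_at_split)
  qed (auto simp: has_real_derivative_iff_has_vector_derivative[symmetric] F f)
  then show ?thesis by (simp add: interval_lebesgue_integral_le_eq)
qed

lemma DERIV_Phi_at: "DERIV Phi x :> phi x"
proof -
  define a where "a = x - 1"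
  have split: "Phi y = Phi a + (LBINT t=a..y. phi t)" if "a < y" for y
  proof -
    have "{..y} = {..a} \<union> {a<..y}" using that by auto
    then have "Phi y = Phi a + (LBINT t:{a<..y}. phi t)"
      unfolding Phi_def by (simp only:) (rule set_integral_Un; auto intro: set_integrable_std_normal_density)
    then show ?thesis using that by (simp add: interval_integral_Ioc)
  qed
  have "((\<lambda>u. LBINT t=a..u. phi t) has_vector_derivative phi x) (at x within {a..x+1})"
    unfolding a_def
    by (intro interval_integral_FTC2 continuous_at_imp_continuous_on) (auto intro: isCont_std_normal_density)
  moreover have "at x within {a..x+1} = at x"
    by (intro at_within_interior) (auto simp: a_def)
  ultimately have "DERIV (\<lambda>u. Phi a + (LBINT t=a..u. phi t)) x :> phi x"
    by (auto intro!: derivative_eq_intros simp: has_real_derivative_iff_has_vector_derivative)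
  then show ?thesis
    by (rule has_field_derivative_transform_within_open[where S = "{a<..}"])
       (auto simp: split a_def)
qed

lemma DERIV_Phi [derivative_intros]:
  "(f has_real_derivative f') (at x within S) \<Longrightarrow>
     ((\<lambda>x. Phi (f x)) has_real_derivative phi (f x) * f') (at x within S)"
  by (rule DERIV_chain2[OF DERIV_Phi_at])

lemma Phi_0: "Phi 0 = 1/2"
proof -
  have "(LBINT t:{0<..}. phi t) = (LBINT t:{..<0}. phi t)"
    unfolding set_lebesgue_integral_def
    by (subst lborel_integral_real_affine[where c = "-1" and t = 0])
       (auto simp: indicator_def normal_density_def)
  then have "(LBINT t:{0<..}. phi t) = Phi 0"
    by (simp add: Phi_eq_tail_integral)
  moreover have "1 = Phi 0 + (LBINT t:{0<..}. phi t)"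
  proof -
    have "{..0} \<union> {0<..} = (UNIV :: real set)" by auto
    then have "1 = (LBINT t:{..0} \<union> {0<..}. phi t)"
      by (simp add: set_lebesgue_integral_def)
    also have "\<dots> = Phi 0 + (LBINT t:{0<..}. phi t)"
      unfolding Phi_def by (rule set_integral_Un) (auto intro: set_integrable_std_normal_density)
    finally show ?thesis .
  qed
  ultimately show ?thesis by simp
qed

lemma std_normal_tail_moment1: "(LBINT x:{..<b}. phi x * x) = - phi b"
proof (rule tail_integral_antiderivative)
  show "DERIV (\<lambda>x. - phi x) x :> phi x * x" for x
    by (auto intro!: derivative_eq_intros)
  show "set_integrable lborel {..<b} (\<lambda>x. phi x * x)"
    using set_integrable_std_normal_moment[of _ 1] by simp
  show "((\<lambda>x. - phi x) \<longlongrightarrow> 0) at_bot"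
    using tendsto_minus[OF std_normal_density_at_bot] by simp
qed (intro continuous_intros isCont_std_normal_density)+

lemma std_normal_tail_moment2: "(LBINT x:{..<b}. phi x * x\<^sup>2) = Phi b - b * phi b"
proof -
  have "(LBINT x:{..<b}. phi x * x\<^sup>2 - phi x) = - b * phi b"
  proof (rule tail_integral_antiderivative)
    show "DERIV (\<lambda>x. - x * phi x) x :> phi x * x\<^sup>2 - phi x" for x
      by (auto intro!: derivative_eq_intros simp: power2_eq_square algebra_simps)
    show "set_integrable lborel {..<b} (\<lambda>x. phi x * x\<^sup>2 - phi x)"
      using set_integrable_std_normal_moment[of _ 2] set_integrable_std_normal_density
      by (intro set_integral_diff) auto
    show "((\<lambda>x. - x * phi x) \<longlongrightarrow> 0) at_bot"
      unfolding std_normal_density_def by real_asymp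
  qed (intro continuous_intros isCont_std_normal_density)+
  then show ?thesis
    using set_integrable_std_normal_moment[of "{..<b}" 2] set_integrable_std_normal_density[of "{..<b}"]
    by (simp add: Phi_eq_tail_integral)
qed

lemma std_normal_lower_partial_moment1:
  "(LBINT x:{..<b}. (b - x) * phi x) = b * Phi b + phi b"
proof -
  have "(LBINT x:{..<b}. (b - x) * phi x) = (LBINT x:{..<b}. b * phi x - phi x * x)"
    by (simp add: algebra_simps)
  also have "\<dots> = b * (LBINT x:{..<b}. phi x) - (LBINT x:{..<b}. phi x * x)"
    using set_integrable_std_normal_density[of "{..<b}"] set_integrable_std_normal_moment[of "{..<b}" 1]
    by simp
  also have "\<dots> = b * Phi b + phi b"
    unfolding std_normal_tail_moment1 Phi_eq_tail_integral by simp
  finally show ?thesis .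
qed

lemma std_normal_lower_partial_moment2:
  "(LBINT x:{..<b}. (b - x)\<^sup>2 * phi x) = (1 + b\<^sup>2) * Phi b + b * phi b"
proof -
  have "(LBINT x:{..<b}. (b - x)\<^sup>2 * phi x) =
      (LBINT x:{..<b}. b\<^sup>2 * phi x - 2 * b * (phi x * x) + phi x * x\<^sup>2)"
    by (simp add: power2_eq_square algebra_simps)
  also have "\<dots> = b\<^sup>2 * (LBINT x:{..<b}. phi x) - 2 * b * (LBINT x:{..<b}. phi x * x)
      + (LBINT x:{..<b}. phi x * x\<^sup>2)"
    using set_integrable_std_normal_density[of "{..<b}"] set_integrable_std_normal_moment[of "{..<b}" 1]
      set_integrable_std_normal_moment[of "{..<b}" 2]
    by simp
  also have "\<dots> = (1 + b\<^sup>2) * Phi b + b * phi b"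
    unfolding std_normal_tail_moment1 std_normal_tail_moment2 Phi_eq_tail_integral
    by (simp add: algebra_simps)
  finally show ?thesis .
qed

lemma set_integral_nonneg_real:
  fixes f :: "'a \<Rightarrow> real"
  shows "(\<And>x. x \<in> A \<Longrightarrow> 0 \<le> f x) \<Longrightarrow> 0 \<le> (LINT x:A|M. f x)"
  unfolding set_lebesgue_integral_def
  by (intro Bochner_Integration.integral_nonneg) (simp add: indicator_def)

lemma M_R_pos: "0 < \<epsilon> \<Longrightarrow> \<epsilon> \<le> 1 \<Longrightarrow> 0 < M_R \<epsilon> \<alpha>"
proof -
  assume eps: "0 < \<epsilon>" "\<epsilon> \<le> 1"
  have "2 * (1 + \<alpha>\<^sup>2) * Phi (- \<alpha>) - 2 * \<alpha> * phi \<alpha>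
      = 2 * (LBINT x:{..<- \<alpha>}. (- \<alpha> - x)\<^sup>2 * phi x)"
    using std_normal_lower_partial_moment2[of "- \<alpha>"] by simp
  moreover have "0 \<le> (LBINT x:{..<- \<alpha>}. (- \<alpha> - x)\<^sup>2 * phi x)"
    by (intro set_integral_nonneg_real) simp
  moreover have "0 < \<epsilon> * (1 + \<alpha>\<^sup>2)"
    using eps by (simp add: add_pos_nonneg)
  ultimately show ?thesis
    using eps unfolding M_R_def by (simp add: add_pos_nonneg)
qed

lemma M_C_pos: "0 < \<epsilon> \<Longrightarrow> \<epsilon> \<le> 1 \<Longrightarrow> 0 < M_C \<epsilon> \<alpha>"
proof -
  assume eps: "0 < \<epsilon>" "\<epsilon> \<le> 1"
  define b where "b = - sqrt 2 * \<alpha>"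
  have "sqrt (2 * pi) * phi (sqrt 2 * \<alpha>) - 2 * \<alpha> * sqrt pi * Phi (- sqrt 2 * \<alpha>)
      = sqrt (2 * pi) * (LBINT x:{..<b}. (b - x) * phi x)"
    unfolding std_normal_lower_partial_moment1
    by (simp add: b_def real_sqrt_mult algebra_simps std_normal_density_minus[of "sqrt 2 * \<alpha>", symmetric])
  moreover have "0 \<le> (LBINT x:{..<b}. (b - x) * phi x)"
    by (intro set_integral_nonneg_real) simp
  moreover have "0 < \<epsilon> * (1 + \<alpha>\<^sup>2)"
    using eps by (simp add: add_pos_nonneg)
  ultimately show ?thesis
    using eps unfolding M_C_def by (simp add: add_pos_nonneg)
qed

lemma M_R_0: "M_R \<epsilon> 0 = 1"
  by (simp add: M_R_def Phi_0)

lemma M_C_0: "M_C \<epsilon> 0 = 1"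
  by (simp add: M_C_def std_normal_density_def)

lemma DERIV_M_R:
  "DERIV (M_R \<epsilon>) \<alpha> :> 2 * \<epsilon> * \<alpha> + 4 * (1 - \<epsilon>) * (\<alpha> * Phi (- \<alpha>) - phi \<alpha>)"
  unfolding M_R_def [abs_def]
  by (auto intro!: derivative_eq_intros simp: power2_eq_square algebra_simps)

lemma DERIV_M_C:
  "DERIV (M_C \<epsilon>) \<alpha> :> 2 * \<epsilon> * \<alpha> - 2 * (1 - \<epsilon>) * sqrt pi * Phi (- sqrt 2 * \<alpha>)"
proof -
  have sqrt2: "sqrt 2 * (sqrt 2 * x) = 2 * x" for x :: real
    by (simp add: mult.assoc[symmetric])
  show ?thesis
    unfolding M_C_def [abs_def]
    by (auto intro!: derivative_eq_intros simp: power2_eq_square algebra_simps real_sqrt_mult sqrt2)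
qed

lemma arg_min_nonneg_less_at_0:
  fixes f :: "real \<Rightarrow> real"
  assumes "is_arg_min f (\<lambda>a. 0 \<le> a) a\<^sub>0" "DERIV f 0 :> l" "l < 0"
  shows "f a\<^sub>0 < f 0"
proof -
  obtain d where "0 < d" "\<And>h. 0 < h \<Longrightarrow> h < d \<Longrightarrow> f (0 + h) < f 0"
    using DERIV_neg_dec_right[OF assms(2,3)] by blast
  then have "f (d / 2) < f 0" by fastforce
  moreover have "f a\<^sub>0 \<le> f (d / 2)"
    using assms(1) \<open>0 < d\<close> by (auto simp: is_arg_min_def not_less)
  ultimately show ?thesis by linarith
qed

lemma is_arg_min_Err_inf:
  assumes M: "0 < M" and \<sigma>: "\<sigma> \<noteq> 0" and min: "is_arg_min (Err_inf M \<sigma>) (\<lambda>d. M < d) \<delta>"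
  shows "\<delta> = 2 * M"
proof (rule ccontr)
  assume "\<delta> \<noteq> 2 * M"
  have "M < \<delta>" using min by (simp add: is_arg_min_def)
  have "Err_inf M \<sigma> \<delta> - Err_inf M \<sigma> (2 * M) = M * \<sigma>\<^sup>2 * (\<delta> - 2 * M)\<^sup>2 / (\<delta> - M)"
    using \<open>M < \<delta>\<close> M by (simp add: Err_inf_def field_simps power2_eq_square)
  also have "\<dots> > 0"
    using \<open>M < \<delta>\<close> \<open>\<delta> \<noteq> 2 * M\<close> M \<sigma> by (intro divide_pos_pos mult_pos_pos) auto
  finally have "Err_inf M \<sigma> (2 * M) < Err_inf M \<sigma> \<delta>" by simp
  then show False using min M by (auto simp: is_arg_min_def)
qed

lemma optimal_measurement_ratio_bounds:
  fixes M :: "real \<Rightarrow> real"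
  assumes pos: "\<And>\<alpha>. 0 < M \<alpha>" and M_0: "M 0 = 1" and "DERIV M 0 :> l" "l < 0"
    and "\<sigma>0 \<noteq> 0"
    and \<alpha>_min: "is_arg_min M (\<lambda>a. 0 \<le> a) \<alpha>d"
    and \<delta>_min: "is_arg_min (Err_inf (M \<alpha>d) \<sigma>0) (\<lambda>d. M \<alpha>d < d) \<delta>d"
  shows "\<delta>d < 2 \<and> (M \<alpha>d < 1/2 \<longrightarrow> \<delta>d < 1)"
proof -
  have "M \<alpha>d < 1"
    using arg_min_nonneg_less_at_0[OF \<alpha>_min \<open>DERIV M 0 :> l\<close> \<open>l < 0\<close>] M_0 by simp
  moreover have "\<delta>d = 2 * M \<alpha>d"
    using is_arg_min_Err_inf[OF pos \<open>\<sigma>0 \<noteq> 0\<close> \<delta>_min] .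
  ultimately show ?thesis by simp
qed

theorem proposition2:
  fixes \<epsilon> \<sigma>0 :: real
  assumes eps: "0 < \<epsilon>" "\<epsilon> < 1"
    and sigma: "\<sigma>0 > 0"
  shows
    "(\<forall>\<alpha>d \<delta>d.
        is_arg_min (M_R \<epsilon>) (\<lambda>a. a \<ge> 0) \<alpha>d \<longrightarrow>
        is_arg_min (Err_inf (M_R \<epsilon> \<alpha>d) \<sigma>0) (\<lambda>d. d > M_R \<epsilon> \<alpha>d) \<delta>d \<longrightarrow>
        \<delta>d < 2 \<and> (M_R \<epsilon> \<alpha>d < 1/2 \<longrightarrow> \<delta>d < 1))
   \<and> (\<forall>\<alpha>d \<delta>d.
        is_arg_min (M_C \<epsilon>) (\<lambda>a. a \<ge> 0) \<alpha>d \<longrightarrow>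
        is_arg_min (Err_inf (M_C \<epsilon> \<alpha>d) \<sigma>0) (\<lambda>d. d > M_C \<epsilon> \<alpha>d) \<delta>d \<longrightarrow>
        \<delta>d < 2 \<and> (M_C \<epsilon> \<alpha>d < 1/2 \<longrightarrow> \<delta>d < 1))"
proof -
  have pos: "\<And>\<alpha>. 0 < M_R \<epsilon> \<alpha>" "\<And>\<alpha>. 0 < M_C \<epsilon> \<alpha>"
    using eps by (simp_all add: M_R_pos M_C_pos)
  have R: "DERIV (M_R \<epsilon>) 0 :> - 4 * (1 - \<epsilon>) * phi 0"
    using DERIV_M_R[of \<epsilon> 0] by (simp add: algebra_simps)
  have C: "DERIV (M_C \<epsilon>) 0 :> - (1 - \<epsilon>) * sqrt pi"
    using DERIV_M_C[of \<epsilon> 0] by (simp add: Phi_0 algebra_simps)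
  have neg: "- 4 * (1 - \<epsilon>) * phi 0 < 0" "- (1 - \<epsilon>) * sqrt pi < 0"
    using eps by (simp_all add: normal_density_pos mult_neg_pos)
  have "\<sigma>0 \<noteq> 0"
    using sigma by simp
  then show ?thesis
    using optimal_measurement_ratio_bounds[OF pos(1) M_R_0 R neg(1)]
      optimal_measurement_ratio_bounds[OF pos(2) M_C_0 C neg(2)] by blast
qed

end
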